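(* Let $\psi'$ be a differentiable strongly convex function, let $G(\pi_i,\pi_i')=D_{\psi'}(\pi_i,\pi_i')$, and fix $\mu>0$. For any $\sigma\in\mathcal X$ and any Nash equilibrium $\pi^*\in\Pi^*$ of the original game, $$D_{\psi'}(\pi^*,\pi^{\mu,\sigma})-D_{\psi'}(\pi^*,\sigma)\le-D_{\psi'}(\pi^{\mu,\sigma},\sigma).$$ In particular, if $\sigma^{k+1}=\pi^{\mu,\sigma^k}$, then $D_{\psi'}(\pi^*,\sigma^{k+1})-D_{\psi'}(\pi^*,\sigma^k)\le-D_{\psi'}(\sigma^{k+1},\sigma^k)$ for all $k\ge0$.
   Context: Game. Let $N\ge1$. For each $i\in[N]$, $\mathcal X_i\subseteq\mathbb R^{d_i}$ is a nonempty compact convex set, and $\mathcal X=\prod_i\mathcal X_i$. Each $v_i:\mathcal X\to\mathbb R$ is differentiable, with block gradient $\nabla_{\pi_i}v_i$. The game is monotone: $\sum_i\langle\nabla_{\pi_i}v_i(\pi)-\nabla_{\pi_i}v_i(\pi'),\pi_i-\pi_i'\rangle\le0$ for all $\pi,\pi'$. A Nash equilibrium is a $\pi^*$ with $v_i(\pi^* )\ge v_i(\pi_i,\pi^*_{-i})$ for all $i$ and $\pi_i\in\mathcal X_i$. $\Pi^*$ is the set of Nash equilibria. Bregman divergence: $D_{\psi'}(x,y)=\psi'(x)-\psi'(y)-\langle\nabla\psi'(y),x-y\rangle$, and $D_{\psi'}(\pi,\pi')=\sum_iD_{\psi'}(\pi_i,\pi_i')$. Perturbed equilibrium. For $\mu>0$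 and $\sigma\in\mathcal X$, $\pi^{\mu,\sigma}$ is the profile with $\pi_i^{\mu,\sigma}\in\arg\max_{\pi_i\in\mathcal X_i}\{v_i(\pi_i,\pi^{\mu,\sigma}_{-i})-\mu G(\pi_i,\sigma_i)\}$ for all $i$. *)

theory Defs
  imports "HOL-Analysis.Analysis"
begin

text \<open>Players are indexed by a finite type 'n (so N = CARD('n) >= 1); every player's
strategy lives in a common Euclidean space 'a; a strategy profile is an element of 'a ^ 'n.\<close>

definition profile_set :: "('n::finite \<Rightarrow> 'a set) \<Rightarrow> ('a ^ 'n) set" where
  "profile_set Xs = {p. \<forall>i. p $ i \<in> Xs i}"

definition upd :: "'a ^ 'n::finite \<Rightarrow> 'n \<Rightarrow> 'a \<Rightarrow> 'a ^ 'n" where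
  "upd p i x = (\<chi> j. if j = i then x else p $ j)"

definition blk :: "'n::finite \<Rightarrow> 'a::zero \<Rightarrow> 'a ^ 'n" where
  "blk i h = (\<chi> j. if j = i then h else 0)"

definition strongly_convex :: "('a::real_inner \<Rightarrow> real) \<Rightarrow> bool" where
  "strongly_convex f \<longleftrightarrow> (\<exists>rho>0. \<forall>x y. \<forall>t::real. 0 \<le> t \<and> t \<le> 1 \<longrightarrow>
      f (t *\<^sub>R x + (1 - t) *\<^sub>R y) \<le> t * f x + (1 - t) * f y
        - rho / 2 * t * (1 - t) * (norm (x - y))\<^sup>2)"

definition bregman :: "('a::real_normed_vector \<Rightarrow> real) \<Rightarrow> 'a \<Rightarrow> 'a \<Rightarrow> real" where
  "bregman psi x y = psi x - psi y - frechet_derivative psi (at y) (x - y)"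

definition bregman_prof :: "('a::real_normed_vector \<Rightarrow> real) \<Rightarrow> 'a ^ 'n::finite \<Rightarrow> 'a ^ 'n \<Rightarrow> real" where
  "bregman_prof psi p q = (\<Sum>i\<in>UNIV. bregman psi (p $ i) (q $ i))"

definition is_block_gradient ::
  "('n::finite \<Rightarrow> 'a::real_inner ^ 'n \<Rightarrow> real) \<Rightarrow> ('n \<Rightarrow> 'a set) \<Rightarrow> ('n \<Rightarrow> 'a ^ 'n \<Rightarrow> 'a) \<Rightarrow> bool" where
  "is_block_gradient v Xs grad \<longleftrightarrow> (\<forall>i. \<forall>p\<in>profile_set Xs. \<exists>D.
      (v i has_derivative D) (at p within profile_set Xs) \<and> (\<forall>h. D (blk i h) = grad i p \<bullet> h))"

definition monotone_game ::
  "('n::finite \<Rightarrow> 'a::real_inner ^ 'n \<Rightarrow> 'a) \<Rightarrow> ('n \<Rightarrow> 'a set) \<Rightarrow> bool" where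
  "monotone_game grad Xs \<longleftrightarrow> (\<forall>p\<in>profile_set Xs. \<forall>q\<in>profile_set Xs.
      (\<Sum>i\<in>UNIV. (grad i p - grad i q) \<bullet> (p $ i - q $ i)) \<le> 0)"

definition nash_eq :: "('n::finite \<Rightarrow> 'a ^ 'n \<Rightarrow> real) \<Rightarrow> ('n \<Rightarrow> 'a set) \<Rightarrow> 'a ^ 'n \<Rightarrow> bool" where
  "nash_eq v Xs p \<longleftrightarrow> p \<in> profile_set Xs \<and> (\<forall>i. \<forall>x\<in>Xs i. v i (upd p i x) \<le> v i p)"

definition perturbed_eq ::
  "('n::finite \<Rightarrow> 'a::real_normed_vector ^ 'n \<Rightarrow> real) \<Rightarrow> ('n \<Rightarrow> 'a set) \<Rightarrow> ('a \<Rightarrow> real) \<Rightarrow> real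
    \<Rightarrow> 'a ^ 'n \<Rightarrow> 'a ^ 'n \<Rightarrow> bool" where
  "perturbed_eq v Xs psi mu sg p \<longleftrightarrow> p \<in> profile_set Xs \<and>
     (\<forall>i. \<forall>x\<in>Xs i. v i (upd p i x) - mu * bregman psi x (sg $ i)
                    \<le> v i p - mu * bregman psi (p $ i) (sg $ i))"

end

theory Submission
  imports Defs
begin

text \<open>Both the perturbed equilibrium \<open>p\<close> and the Nash equilibrium \<open>p\<^sup>*\<close> satisfy first-order
variational inequalities on each player's convex strategy set. For \<open>p\<close> the inequality involves
the gradient of \<open>\<mu> D\<^sub>\<psi>(\<cdot>, \<sigma>\<^sub>i)\<close>, which the three-point identity of Bregman divergences turns
into \<open>D\<^sub>\<psi>(p\<^sup>*, p) - D\<^sub>\<psi>(p\<^sup>*, \<sigma>) + D\<^sub>\<psi>(p, \<sigma>) \<le> \<mu>\<^sup>-\<^sup>1 \<Sum>\<^sub>i \<langle>\<nabla>\<^sub>iv\<^sub>i(p), p\<^sub>i - p\<^sup>*\<^sub>i\<rangle>\<close>.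
Monotonicity of the game bounds the right-hand side by \<open>\<mu>\<^sup>-\<^sup>1 \<Sum>\<^sub>i \<langle>\<nabla>\<^sub>iv\<^sub>i(p\<^sup>*), p\<^sub>i - p\<^sup>*\<^sub>i\<rangle>\<close>,
which is nonpositive by the Nash inequality.\<close>

lemma has_real_derivative_nonpos_at_left_maximum:
  fixes f :: "real \<Rightarrow> real"
  assumes der: "(f has_real_derivative l) (at 0 within {0..1})"
    and max: "\<forall>t\<in>{0..1}. f t \<le> f 0"
  shows "l \<le> 0"
proof (rule ccontr)
  assume "\<not> l \<le> 0"
  then obtain d where "d > 0" and inc: "\<forall>h>0. 0 + h \<in> {0..1} \<longrightarrow> h < d \<longrightarrow> f 0 < f (0 + h)"
    using has_real_derivative_pos_inc_right[OF der] by auto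
  then have "f 0 < f (min (d/2) 1)" by auto
  moreover have "f (min (d/2) 1) \<le> f 0" using max \<open>d > 0\<close> by auto
  ultimately show False by linarith
qed

lemma has_derivative_nonpos_at_maximum_on_convex:
  fixes f :: "'b::real_normed_vector \<Rightarrow> real"
  assumes der: "(f has_derivative D) (at x within S)"
    and S: "convex S" and x: "x \<in> S" and y: "y \<in> S"
    and max: "\<forall>z\<in>S. f z \<le> f x"
  shows "D (y - x) \<le> 0"
proof -
  interpret D: bounded_linear D using has_derivative_bounded_linear[OF der] .
  define g where "g t = x + t *\<^sub>R (y - x)" for t :: real
  have g_segment: "g ` {0..1} \<subseteq> S"
  proof clarify
    fix t :: real assume "t \<in> {0..1}"
    then have "(1 - t) *\<^sub>R x + t *\<^sub>R y \<in> S" by (intro convexD[OF S x y]) auto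
    then show "g t \<in> S" by (simp add: g_def algebra_simps)
  qed
  have "(g has_derivative (\<lambda>t. t *\<^sub>R (y - x))) (at 0 within {0..1})"
    unfolding g_def by (intro derivative_eq_intros) auto
  moreover have "(f has_derivative D) (at (g 0) within g ` {0..1})"
    using has_derivative_subset[OF der g_segment] by (simp add: g_def)
  ultimately have "((f \<circ> g) has_derivative (D \<circ> (\<lambda>t. t *\<^sub>R (y - x)))) (at 0 within {0..1})"
    by (rule diff_chain_within)
  then have "((f \<circ> g) has_real_derivative D (y - x)) (at 0 within {0..1})"
    by (simp add: has_field_derivative_def o_def D.scaleR mult_commute_abs)
  moreover have "\<forall>t\<in>{0..1}. (f \<circ> g) t \<le> (f \<circ> g) 0"
    using max g_segment by (auto simp: g_def)
  ultimately show ?thesis by (rule has_real_derivative_nonpos_at_left_maximum)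
qed

lemma blk_eq_axis: "blk = axis"
  by (simp add: blk_def axis_def fun_eq_iff)

lemma bounded_linear_axis: "bounded_linear (axis i :: 'a::real_inner \<Rightarrow> 'a ^ 'n::finite)"
proof (rule bounded_linear_intro[where K = 1])
  show "norm (axis i x :: 'a ^ 'n) \<le> norm x * 1" for x :: 'a
    by (simp add: norm_eq_sqrt_inner inner_axis_axis)
qed (simp_all add: axis_def vec_eq_iff)

lemma upd_has_derivative:
  fixes q :: "'a::real_inner ^ 'n::finite"
  shows "(upd q i has_derivative blk i) (at x within S)"
proof -
  have "upd q i = (\<lambda>x. q + axis i (x - q $ i))"
    by (simp add: upd_def axis_def vec_eq_iff fun_eq_iff)
  moreover have "((\<lambda>x. q + axis i (x - q $ i)) has_derivative axis i) (at x within S)"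
    using has_derivative_add[OF has_derivative_const bounded_linear.has_derivative[OF bounded_linear_axis,
        OF has_derivative_diff[OF has_derivative_ident has_derivative_const]]]
    by simp
  ultimately show ?thesis by (simp add: blk_eq_axis)
qed

lemma block_first_order_condition:
  fixes Xs :: "'n::finite \<Rightarrow> 'a::real_inner set"
  assumes grad: "is_block_gradient v Xs grad"
    and q: "q \<in> profile_set Xs" and convex: "convex (Xs i)"
    and g: "(g has_derivative G) (at (q $ i))"
    and max: "\<forall>x\<in>Xs i. v i (upd q i x) - g x \<le> v i q - g (q $ i)"
    and y: "y \<in> Xs i"
  shows "grad i q \<bullet> (y - q $ i) \<le> G (y - q $ i)"
proof -
  obtain D where D: "(v i has_derivative D) (at q within profile_set Xs)"
    and D_blk: "\<And>h. D (blk i h) = grad i q \<bullet> h"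
    using grad q unfolding is_block_gradient_def by blast
  have upd_self: "upd q i (q $ i) = q" by (simp add: upd_def vec_eq_iff)
  have qi: "q $ i \<in> Xs i" using q by (simp add: profile_set_def)
  have "upd q i ` Xs i \<subseteq> profile_set Xs"
    using q by (auto simp: profile_set_def upd_def)
  with D upd_self have "(v i has_derivative D) (at (upd q i (q $ i)) within upd q i ` Xs i)"
    by (simp add: has_derivative_subset)
  with upd_has_derivative have "((v i \<circ> upd q i) has_derivative (D \<circ> blk i)) (at (q $ i) within Xs i)"
    by (rule diff_chain_within)
  from has_derivative_diff[OF this has_derivative_at_withinI[OF g]]
  have "((\<lambda>x. (v i \<circ> upd q i) x - g x) has_derivative (\<lambda>h. (D \<circ> blk i) h - G h))
      (at (q $ i) within Xs i)" .
  from has_derivative_nonpos_at_maximum_on_convex[OF this convex qi y] max upd_self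
  show ?thesis by (simp add: D_blk)
qed

lemma nash_eq_variational_inequality:
  assumes grad: "is_block_gradient v Xs grad" and convex: "convex (Xs i)"
    and nash: "nash_eq v Xs q" and x: "x \<in> Xs i"
  shows "grad i q \<bullet> (x - q $ i) \<le> 0"
  using block_first_order_condition[OF grad _ convex, of q "\<lambda>_. 0" "\<lambda>_. 0"] nash x
  by (simp add: nash_eq_def)

lemma bregman_has_derivative:
  assumes psi: "\<And>x. psi differentiable (at x)"
  shows "((\<lambda>x. bregman psi x y) has_derivative
          (\<lambda>h. frechet_derivative psi (at x) h - frechet_derivative psi (at y) h)) (at x)"
proof -
  have psi_der: "(psi has_derivative frechet_derivative psi (at z)) (at z)" for z
    using psi frechet_derivative_works by blast
  interpret Dy: bounded_linear "frechet_derivative psi (at y)"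
    using has_derivative_bounded_linear[OF psi_der] .
  have "((\<lambda>x. frechet_derivative psi (at y) (x - y)) has_derivative frechet_derivative psi (at y)) (at x)"
    using Dy.has_derivative[OF has_derivative_diff[OF has_derivative_ident has_derivative_const]]
    by simp
  from has_derivative_diff[OF has_derivative_diff[OF psi_der has_derivative_const] this]
  show ?thesis unfolding bregman_def by simp
qed

lemma perturbed_eq_variational_inequality:
  assumes grad: "is_block_gradient v Xs grad" and convex: "convex (Xs i)"
    and psi: "\<And>x. psi differentiable (at x)"
    and pert: "perturbed_eq v Xs psi mu sg p" and x: "x \<in> Xs i"
  shows "grad i p \<bullet> (x - p $ i)
    \<le> mu * (frechet_derivative psi (at (p $ i)) (x - p $ i) - frechet_derivative psi (at (sg $ i)) (x - p $ i))"
proof -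
  have "((\<lambda>x. mu * bregman psi x (sg $ i)) has_derivative
      (\<lambda>h. mu * (frechet_derivative psi (at (p $ i)) h - frechet_derivative psi (at (sg $ i)) h))) (at (p $ i))"
    by (rule has_derivative_mult_right[OF bregman_has_derivative[OF psi]])
  from block_first_order_condition[OF grad _ convex this] pert x show ?thesis
    by (simp add: perturbed_eq_def)
qed

lemma bregman_three_point:
  assumes "psi differentiable (at z)"
  shows "bregman psi x y - bregman psi x z + bregman psi y z
    = frechet_derivative psi (at z) (x - y) - frechet_derivative psi (at y) (x - y)"
proof -
  interpret Dz: bounded_linear "frechet_derivative psi (at z)"
    using assms frechet_derivative_works has_derivative_bounded_linear by blast
  have "frechet_derivative psi (at z) (x - z) - frechet_derivative psi (at z) (y - z)
      = frechet_derivative psi (at z) (x - y)"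
    by (simp flip: Dz.diff)
  then show ?thesis unfolding bregman_def by simp
qed

lemma perturbed_eq_bregman_descent:
  fixes Xs :: "'n::finite \<Rightarrow> 'a::real_inner set"
  assumes convex: "\<And>i. convex (Xs i)"
    and grad: "is_block_gradient v Xs grad" and mono: "monotone_game grad Xs"
    and psi: "\<And>x. psi differentiable (at x)" and mu: "mu > 0"
    and pert: "perturbed_eq v Xs psi mu sg p" and nash: "nash_eq v Xs q"
  shows "bregman_prof psi q p - bregman_prof psi q sg \<le> - bregman_prof psi p sg"
proof -
  have p: "p \<in> profile_set Xs" using pert by (simp add: perturbed_eq_def)
  have q: "q \<in> profile_set Xs" using nash by (simp add: nash_eq_def)
  have blockwise: "bregman psi (q $ i) (p $ i) - bregman psi (q $ i) (sg $ i) + bregman psi (p $ i) (sg $ i)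
      \<le> grad i p \<bullet> (p $ i - q $ i) / mu" for i
  proof -
    have "grad i p \<bullet> (q $ i - p $ i) \<le> mu * (frechet_derivative psi (at (p $ i)) (q $ i - p $ i)
        - frechet_derivative psi (at (sg $ i)) (q $ i - p $ i))"
      using perturbed_eq_variational_inequality[OF grad convex psi pert] q
      by (simp add: profile_set_def)
    then have "mu * (frechet_derivative psi (at (sg $ i)) (q $ i - p $ i)
        - frechet_derivative psi (at (p $ i)) (q $ i - p $ i)) \<le> grad i p \<bullet> (p $ i - q $ i)"
      by (simp add: inner_diff_right algebra_simps)
    with mu show ?thesis
      by (simp add: bregman_three_point[OF psi] pos_le_divide_eq mult.commute)
  qed
  have "(\<Sum>i\<in>UNIV. grad i p \<bullet> (p $ i - q $ i)) \<le> (\<Sum>i\<in>UNIV. grad i q \<bullet> (p $ i - q $ i))"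
    using mono p q by (simp add: monotone_game_def inner_diff_left sum_subtractf)
  also have "\<dots> \<le> 0"
    using nash_eq_variational_inequality[OF grad convex nash] p
    by (intro sum_nonpos) (simp add: profile_set_def)
  finally have gradient_sum: "(\<Sum>i\<in>UNIV. grad i p \<bullet> (p $ i - q $ i)) \<le> 0" .
  have "bregman_prof psi q p - bregman_prof psi q sg + bregman_prof psi p sg
      = (\<Sum>i\<in>UNIV. bregman psi (q $ i) (p $ i) - bregman psi (q $ i) (sg $ i) + bregman psi (p $ i) (sg $ i))"
    by (simp add: bregman_prof_def sum.distrib sum_subtractf)
  also have "\<dots> \<le> (\<Sum>i\<in>UNIV. grad i p \<bullet> (p $ i - q $ i)) / mu"
    unfolding sum_divide_distrib by (intro sum_mono blockwise)
  also have "\<dots> \<le> 0" using gradient_sum mu by (simp add: divide_nonpos_pos)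
  finally show ?thesis by simp
qed

text \<open>Compactness, nonemptiness and strong convexity only guarantee that perturbed equilibria
exist; the descent inequality itself does not need them, nor that \<open>\<sigma>\<close> be a feasible profile.\<close>

theorem lemma9:
  fixes Xs :: "'n::finite \<Rightarrow> 'a::euclidean_space set"
    and v :: "'n \<Rightarrow> 'a ^ 'n \<Rightarrow> real"
    and grad :: "'n \<Rightarrow> 'a ^ 'n \<Rightarrow> 'a"
    and psi :: "'a \<Rightarrow> real"
    and mu :: real
  assumes Xs_ne: "\<And>i. Xs i \<noteq> {}"
    and Xs_compact: "\<And>i. compact (Xs i)"
    and Xs_convex: "\<And>i. convex (Xs i)"
    and grad: "is_block_gradient v Xs grad"
    and mono: "monotone_game grad Xs"
    and psi_diff: "\<And>x. psi differentiable (at x)"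
    and psi_sc: "strongly_convex psi"
    and mu_pos: "mu > 0"
  shows "(\<forall>sg \<in> profile_set Xs. \<forall>p pstar. perturbed_eq v Xs psi mu sg p \<longrightarrow> nash_eq v Xs pstar \<longrightarrow>
            bregman_prof psi pstar p - bregman_prof psi pstar sg \<le> - bregman_prof psi p sg)
       \<and> (\<forall>(s :: nat \<Rightarrow> 'a ^ 'n) pstar. s 0 \<in> profile_set Xs
            \<longrightarrow> (\<forall>k. perturbed_eq v Xs psi mu (s k) (s (Suc k)))
            \<longrightarrow> nash_eq v Xs pstar
            \<longrightarrow> (\<forall>k. bregman_prof psi pstar (s (Suc k)) - bregman_prof psi pstar (s k)
                       \<le> - bregman_prof psi (s (Suc k)) (s k)))"
  using perturbed_eq_bregman_descent[OF Xs_convex grad mono psi_diff mu_pos] by blast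

end
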